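(* Let $C_{TS}>0$ be a fixed absolute constant and, for a problem instance, let $N_{TS}=C_{TS}\,\varepsilon_{TS}^{-2}\log(\delta_{TS}^{-1})$ where $\varepsilon_{TS}=\min_{i,j\in[K]}\mathbb E[(\mu_i-\mu_j)_+]$ and $\delta_{TS}=\min_{i\in[K]}\Pr[A^*=i]$. Let $\mathcal C$ be a fixed finite collection of priors on $[0,1]$ such that every problem instance (with any number of arms) whose priors all belong to $\mathcal C$ satisfies pairwise non-dominance. Then there is a constant $c_{\mathcal C}$ depending only on $\mathcal C$ (and $C_{TS}$) such that for every $K$ and every $K$-armed problem instance with all priors $\mathcal P_i\in\mathcal C$, $N_{TS}\leq c_{\mathcal C}\,K$.
   Context: A problem instance consists of $K$ arms with mean rewards $\mu_1,\dots,\mu_K\in[0,1]$ drawn independently, $\mu_i\sim\mathcal P_i$. $A^*=\min(\arg\max_j\mu_j)$. $(x)_+=\max(x,0)$. Pairwise non-dominance: for all arms $i\neq j$, $\Pr[\mu_j<\mathbb E[\mu_i]]>0$. *)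

theory Defs
  imports "HOL-Probability.Probability"
begin

definition is_prior :: "real measure \<Rightarrow> bool" where
  "is_prior P \<longleftrightarrow> prob_space P \<and> sets P = sets borel \<and> emeasure P {0..1} = 1"

definition inst_law :: "nat \<Rightarrow> (nat \<Rightarrow> real measure) \<Rightarrow> (nat \<Rightarrow> real) measure" where
  "inst_law K Pr = PiM {..<K} Pr"

definition A_star :: "nat \<Rightarrow> (nat \<Rightarrow> real) \<Rightarrow> nat" where
  "A_star K mu = (LEAST i. i < K \<and> (\<forall>j<K. mu j \<le> mu i))"

definition pairwise_nondom :: "nat \<Rightarrow> (nat \<Rightarrow> real measure) \<Rightarrow> bool" where
  "pairwise_nondom K Pr \<longleftrightarrow>
     (\<forall>i<K. \<forall>j<K. i \<noteq> j \<longrightarrow>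
        measure (inst_law K Pr)
          {mu \<in> space (inst_law K Pr). mu j < integral\<^sup>L (inst_law K Pr) (\<lambda>mu. mu i)} > 0)"

definition eps_TS :: "nat \<Rightarrow> (nat \<Rightarrow> real measure) \<Rightarrow> real" where
  "eps_TS K Pr = Min {integral\<^sup>L (inst_law K Pr) (\<lambda>mu. max (mu i - mu j) 0) | i j.
                        i < K \<and> j < K \<and> i \<noteq> j}"

definition delta_TS :: "nat \<Rightarrow> (nat \<Rightarrow> real measure) \<Rightarrow> real" where
  "delta_TS K Pr = Min {measure (inst_law K Pr) {mu \<in> space (inst_law K Pr). A_star K mu = i} | i.
                          i < K}"

definition N_TS :: "real \<Rightarrow> nat \<Rightarrow> (nat \<Rightarrow> real measure) \<Rightarrow> real" where
  "N_TS C_TS K Pr = C_TS * (1 / (eps_TS K Pr)\<^sup>2) * ln (1 / delta_TS K Pr)"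

end

theory Submission
  imports Defs
begin

(* Everything entering N_TS is controlled by finitely many constants attached to pairs of
   priors from the finite family. Non-dominance of two-armed instances gives Q[x < E_P x] > 0
   for all P, Q in the family, hence some s < E_P x with Q[x <= s] > 0. For independent arms
   i and j, the event {mu_i >= E mu_i, mu_j <= s} has positive probability
   P_i[x >= E x] * P_j[x <= s] and forces (mu_i - mu_j)_+ >= E mu_i - s, so by Markov's
   inequality eps_TS is bounded below independently of K. Arm i is the first maximiser whenever
   mu_i >= E mu_i and all other arms fall below E mu_i; with q a common lower bound of
   P[x >= E_P x] and Q[x < E_P x], this event has probability at least q^K, so
   ln(1/delta_TS) <= K ln(1/q). *)

lemma finite_ex_pos_lower_bound:
  fixes f :: "'a \<Rightarrow> real"
  assumes "finite A" "\<And>x. x \<in> A \<Longrightarrow> 0 < f x"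
  shows "\<exists>c>0. \<forall>x\<in>A. c \<le> f x"
proof (cases "A = {}")
  case False
  then show ?thesis using assms by (intro exI[of _ "Min (f ` A)"]) auto
qed (auto intro: exI[of _ 1])

lemma is_prior_real_distribution: "is_prior P \<Longrightarrow> real_distribution P"
  by (auto simp: is_prior_def real_distribution_def real_distribution_axioms_def)

lemma is_prior_space: "is_prior P \<Longrightarrow> space P = UNIV"
  by (simp add: is_prior_def sets_eq_imp_space_eq)

lemma is_prior_AE_unit_interval:
  assumes "is_prior P"
  shows "AE x in P. x \<in> {0..1}"
proof -
  interpret real_distribution P using assms by (rule is_prior_real_distribution)
  have "emeasure P {0..1} = 1" using assms by (simp add: is_prior_def)
  then show ?thesis by (intro AE_prob_1) (simp_all add: emeasure_eq_measure)
qed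

lemma is_prior_integrable_id:
  assumes "is_prior P"
  shows "integrable P (\<lambda>x. x)"
proof -
  interpret real_distribution P using assms by (rule is_prior_real_distribution)
  have "AE x in P. norm x \<le> 1"
    using is_prior_AE_unit_interval[OF assms] by eventually_elim auto
  then show ?thesis
    by (rule integrable_const_bound) (simp add: measurable_ident_sets)
qed

definition mean :: "real measure \<Rightarrow> real" where
  "mean P = integral\<^sup>L P (\<lambda>x. x)"

lemma (in real_distribution) measure_atLeast_expectation_pos:
  assumes "integrable M (\<lambda>x. x)"
  shows "0 < measure M {expectation (\<lambda>x. x)..}"
proof (rule ccontr)
  let ?m = "expectation (\<lambda>x::real. x)"
  assume "\<not> 0 < measure M {?m..}"
  then have "emeasure M {?m..} = 0" by (simp add: emeasure_eq_measure not_less measure_le_0_iff)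
  then have below: "AE x in M. x < ?m"
    by (subst AE_iff_measurable[of "{?m..}"]) (auto simp: borel_UNIV)
  have "integral\<^sup>L M (\<lambda>x. ?m - x) = 0"
    using assms(1) prob_space by simp
  then have "AE x in M. ?m - x = 0"
    using below assms(1) by (subst integral_nonneg_eq_0_iff_AE[symmetric]) (auto elim!: eventually_mono)
  with below have "AE x in M. False" by eventually_elim auto
  then show False by simp
qed

lemma is_prior_measure_atLeast_mean_pos:
  "is_prior P \<Longrightarrow> 0 < measure P {mean P..}"
  unfolding mean_def using is_prior_integrable_id
  by (intro real_distribution.measure_atLeast_expectation_pos is_prior_real_distribution)

lemma (in finite_borel_measure) measure_lessThan_pos_imp_ex_atMost:
  assumes "0 < measure M {..<m}"
  shows "\<exists>s<m. 0 < measure M {..s}"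
proof -
  have "\<forall>\<^sub>F s in at_left m. 0 < cdf M s"
    using order_tendstoD(1)[OF cdf_at_left assms] .
  then obtain s where "s < m" "0 < cdf M s"
    by (auto simp: eventually_at_left_field dest: dense)
  then show ?thesis by (auto simp: cdf_def)
qed

lemma measure_PiM_prod_emb:
  assumes "\<And>i. i \<in> I \<Longrightarrow> prob_space (M i)" "J \<subseteq> I" "finite J"
    "\<And>i. i \<in> J \<Longrightarrow> A i \<in> sets (M i)"
  shows "measure (PiM I M) (prod_emb I M J (PiE J A)) = (\<Prod>i\<in>J. measure (M i) (A i))"
proof -
  interpret prob_space "PiM I M" using assms(1) by (rule prob_space_PiM)
  have "emeasure (M i) (A i) = ennreal (measure (M i) (A i))" if "i \<in> J" for i
    using assms(1) \<open>J \<subseteq> I\<close> that by (simp add: prob_space_def finite_measure.emeasure_eq_measure subset_eq)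
  then have "ennreal (measure (PiM I M) (prod_emb I M J (PiE J A)))
      = (\<Prod>i\<in>J. ennreal (measure (M i) (A i)))"
    using assms by (simp add: emeasure_eq_measure[symmetric] emeasure_PiM_emb)
  then show ?thesis by (simp add: prod_ennreal prod_nonneg)
qed

lemma measure_PiM_PiE:
  assumes "\<And>i. i \<in> I \<Longrightarrow> prob_space (M i)" "finite I" "\<And>i. i \<in> I \<Longrightarrow> A i \<in> sets (M i)"
  shows "measure (PiM I M) (PiE I A) = (\<Prod>i\<in>I. measure (M i) (A i))"
  using measure_PiM_prod_emb[OF assms(1) order_refl assms(2,3)] assms(3)
  by (simp add: sets.sets_into_space)

lemma measure_PiM_two_components:
  assumes "\<And>i. i \<in> I \<Longrightarrow> prob_space (M i)" "i \<in> I" "j \<in> I" "i \<noteq> j"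
    "A \<in> sets (M i)" "B \<in> sets (M j)"
  shows "measure (PiM I M) {x \<in> space (PiM I M). x i \<in> A \<and> x j \<in> B}
       = measure (M i) A * measure (M j) B"
proof -
  let ?F = "\<lambda>k. if k = i then A else B"
  have "{x \<in> space (PiM I M). x i \<in> A \<and> x j \<in> B} = prod_emb I M {i, j} (PiE {i, j} ?F)"
    using assms(2-4) by (auto simp: prod_emb_def space_PiM)
  also have "measure (PiM I M) \<dots> = (\<Prod>k\<in>{i, j}. measure (M k) (?F k))"
    using assms by (intro measure_PiM_prod_emb) auto
  finally show ?thesis using assms(4) by simp
qed

lemma measure_PiM_component:
  assumes "\<And>i. i \<in> I \<Longrightarrow> prob_space (M i)" "i \<in> I" "A \<in> sets (M i)"
  shows "measure (PiM I M) {x \<in> space (PiM I M). x i \<in> A} = measure (M i) A"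
proof -
  have "measure (M i) A = measure (distr (PiM I M) (M i) (\<lambda>x. x i)) A"
    using assms(1,2) by (simp add: distr_PiM_component)
  also have "\<dots> = measure (PiM I M) ((\<lambda>x. x i) -` A \<inter> space (PiM I M))"
    using assms(2,3) by (intro measure_distr measurable_component_singleton)
  finally show ?thesis by (simp add: Int_def conj_commute)
qed

lemma integral_PiM_component:
  fixes f :: "'a \<Rightarrow> real"
  assumes "\<And>i. i \<in> I \<Longrightarrow> prob_space (M i)" "i \<in> I" "f \<in> borel_measurable (M i)"
  shows "(\<integral>x. f (x i) \<partial>PiM I M) = integral\<^sup>L (M i) f"
proof -
  have "integral\<^sup>L (M i) f = integral\<^sup>L (distr (PiM I M) (M i) (\<lambda>x. x i)) f"
    using assms(1,2) by (simp add: distr_PiM_component)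
  also have "\<dots> = (\<integral>x. f (x i) \<partial>PiM I M)"
    using assms(2,3) by (intro integral_distr measurable_component_singleton)
  finally show ?thesis by simp
qed

lemma is_prior_component_measurable:
  assumes "\<And>k. k \<in> I \<Longrightarrow> is_prior (M k)" "i \<in> I"
  shows "(\<lambda>x. x i) \<in> borel_measurable (PiM I M)"
proof -
  have "(\<lambda>x. x i) \<in> measurable (PiM I M) (M i)"
    using assms(2) by (rule measurable_component_singleton)
  also have "measurable (PiM I M) (M i) = borel_measurable (PiM I M)"
    using assms by (intro measurable_cong_sets) (auto simp: is_prior_def)
  finally show ?thesis .
qed

lemma integral_PiM_pos_part_diff_ge:
  fixes M :: "'i \<Rightarrow> real measure"
  assumes prior: "\<And>k. k \<in> I \<Longrightarrow> is_prior (M k)" and "i \<in> I" "j \<in> I" "i \<noteq> j" "s < t"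
  shows "(t - s) * (measure (M i) {t..} * measure (M j) {..s})
      \<le> (\<integral>x. max (x i - x j) 0 \<partial>PiM I M)"
proof -
  have ps: "\<And>k. k \<in> I \<Longrightarrow> prob_space (M k)" using prior by (simp add: is_prior_def)
  interpret prob_space "PiM I M" using ps by (rule prob_space_PiM)
  have [measurable]: "(\<lambda>x. x i) \<in> borel_measurable (PiM I M)" "(\<lambda>x. x j) \<in> borel_measurable (PiM I M)"
    using assms by (auto intro: is_prior_component_measurable)
  have "AE x in PiM I M. x i \<in> {0..1} \<and> x j \<in> {0..1}"
    using assms by (intro AE_conjI AE_PiM_component ps is_prior_AE_unit_interval prior)
  then have "AE x in PiM I M. norm (max (x i - x j) 0) \<le> 1"
    by eventually_elim auto
  then have integrable: "integrable (PiM I M) (\<lambda>x. max (x i - x j) 0)"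
    by (rule integrable_const_bound) measurable
  have "measure (M i) {t..} * measure (M j) {..s}
      = measure (PiM I M) {x \<in> space (PiM I M). x i \<in> {t..} \<and> x j \<in> {..s}}"
    using assms by (intro measure_PiM_two_components[symmetric] ps) (auto simp: is_prior_def)
  also have "\<dots> \<le> measure (PiM I M) {x \<in> space (PiM I M). t - s \<le> max (x i - x j) 0}"
    by (intro finite_measure_mono) (auto, measurable)
  also have "\<dots> \<le> (\<integral>x. max (x i - x j) 0 \<partial>PiM I M) / (t - s)"
    using integrable \<open>s < t\<close>
    by (intro integral_Markov_inequality_measure[where A="space (PiM I M)"]) simp_all
  finally show ?thesis using \<open>s < t\<close> by (simp add: field_simps)
qed

lemma A_star_eq_iff:
  assumes "i < K"
  shows "A_star K mu = i \<longleftrightarrow> (\<forall>j<K. mu j \<le> mu i) \<and> (\<forall>j<i. mu j < mu i)"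
proof
  assume first_max: "(\<forall>j<K. mu j \<le> mu i) \<and> (\<forall>j<i. mu j < mu i)"
  show "A_star K mu = i"
    unfolding A_star_def
  proof (rule Least_equality)
    show "i < K \<and> (\<forall>j<K. mu j \<le> mu i)" using first_max assms by auto
    fix k assume "k < K \<and> (\<forall>j<K. mu j \<le> mu k)"
    then show "i \<le> k" using first_max assms by (meson leD leI)
  qed
next
  assume A_star: "A_star K mu = i"
  have "Max (mu ` {..<K}) \<in> mu ` {..<K}" using assms by (intro Max_in) auto
  then obtain m where "m < K" "mu m = Max (mu ` {..<K})" by auto
  then have "m < K \<and> (\<forall>j<K. mu j \<le> mu m)" by simp
  then have max: "\<forall>j<K. mu j \<le> mu i"
    using LeastI[of "\<lambda>k. k < K \<and> (\<forall>j<K. mu j \<le> mu k)" m] A_star by (simp add: A_star_def)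
  have "mu j < mu i" if "j < i" for j
  proof -
    have "\<not> (j < K \<and> (\<forall>j'<K. mu j' \<le> mu j))"
      using not_less_Least[of j "\<lambda>k. k < K \<and> (\<forall>j<K. mu j \<le> mu k)"] that A_star
      by (simp add: A_star_def)
    then show ?thesis using max that assms by force
  qed
  with max show "(\<forall>j<K. mu j \<le> mu i) \<and> (\<forall>j<i. mu j < mu i)" by auto
qed

lemma sets_A_star_eq:
  assumes prior: "\<And>k. k < K \<Longrightarrow> is_prior (Pr k)" and "i < K"
  shows "{mu \<in> space (inst_law K Pr). A_star K mu = i} \<in> sets (inst_law K Pr)"
proof -
  have comp: "(\<lambda>mu. mu k) \<in> borel_measurable (inst_law K Pr)" if "k < K" for k
    unfolding inst_law_def using prior that by (intro is_prior_component_measurable) auto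
  have "{mu \<in> space (inst_law K Pr). A_star K mu = i}
      = {mu \<in> space (inst_law K Pr). (\<forall>j\<in>{..<K}. mu j \<le> mu i) \<and> (\<forall>j\<in>{..<i}. mu j < mu i)}"
    using A_star_eq_iff[OF \<open>i < K\<close>] by auto
  also have "\<dots> \<in> sets (inst_law K Pr)"
    using \<open>i < K\<close> by (intro sets.sets_Collect_conj sets.sets_Collect_finite_All
        borel_measurable_le borel_measurable_less comp) auto
  finally show ?thesis .
qed

lemma measure_A_star_ge:
  assumes prior: "\<And>k. k < K \<Longrightarrow> is_prior (Pr k)" and "i < K" "0 \<le> q"
    and "q \<le> measure (Pr i) {t..}" "\<And>k. k < K \<Longrightarrow> k \<noteq> i \<Longrightarrow> q \<le> measure (Pr k) {..<t}"
  shows "q ^ K \<le> measure (inst_law K Pr) {mu \<in> space (inst_law K Pr). A_star K mu = i}"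
proof -
  interpret prob_space "inst_law K Pr"
    unfolding inst_law_def using prior by (intro prob_space_PiM) (simp add: is_prior_def)
  let ?A = "\<lambda>k. if k = i then {t..} else {..<t}"
  have "q ^ K = (\<Prod>k<K. q)" by simp
  also have "\<dots> \<le> (\<Prod>k<K. measure (Pr k) (?A k))"
    using assms by (intro prod_mono) auto
  also have "\<dots> = measure (inst_law K Pr) (PiE {..<K} ?A)"
    unfolding inst_law_def using prior
    by (intro measure_PiM_PiE[symmetric]) (auto simp: is_prior_def)
  also have "\<dots> \<le> measure (inst_law K Pr) {mu \<in> space (inst_law K Pr). A_star K mu = i}"
  proof (intro finite_measure_mono subsetI)
    show "{mu \<in> space (inst_law K Pr). A_star K mu = i} \<in> sets (inst_law K Pr)"
      using assms by (intro sets_A_star_eq)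
    fix mu assume mu: "mu \<in> PiE {..<K} ?A"
    have "t \<le> mu i" using PiE_mem[OF mu, of i] \<open>i < K\<close> by simp
    then have "mu j < mu i" if "j < K" "j \<noteq> i" for j
      using PiE_mem[OF mu, of j] that by simp
    then have "(\<forall>j<K. mu j \<le> mu i) \<and> (\<forall>j<i. mu j < mu i)"
      using \<open>i < K\<close> by (metis less_imp_le nat_neq_iff order_refl order.strict_trans)
    moreover have "space (inst_law K Pr) = PiE {..<K} (\<lambda>_. UNIV)"
      unfolding inst_law_def space_PiM using prior by (intro PiE_cong) (simp add: is_prior_space)
    then have "mu \<in> space (inst_law K Pr)"
      using mu by (simp add: PiE_iff)
    ultimately show "mu \<in> {mu \<in> space (inst_law K Pr). A_star K mu = i}"
      using A_star_eq_iff[OF \<open>i < K\<close>] by auto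
  qed
  finally show ?thesis .
qed

lemma eps_TS_ge:
  assumes "2 \<le> K"
    and "\<And>i j. i < K \<Longrightarrow> j < K \<Longrightarrow> i \<noteq> j \<Longrightarrow> e \<le> (\<integral>mu. max (mu i - mu j) 0 \<partial>inst_law K Pr)"
  shows "e \<le> eps_TS K Pr"
proof -
  let ?S = "{integral\<^sup>L (inst_law K Pr) (\<lambda>mu. max (mu i - mu j) 0) | i j. i < K \<and> j < K \<and> i \<noteq> j}"
  have "?S \<subseteq> (\<lambda>(i, j). integral\<^sup>L (inst_law K Pr) (\<lambda>mu. max (mu i - mu j) 0)) ` ({..<K} \<times> {..<K})"
    by auto
  then have "finite ?S" by (rule finite_subset) simp
  moreover have "(0::nat) < K" "(1::nat) < K" using assms(1) by auto
  then have "?S \<noteq> {}" by blast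
  ultimately show ?thesis
    unfolding eps_TS_def using assms(2) by (auto simp: Min_ge_iff)
qed

lemma delta_TS_ge:
  assumes "0 < K"
    and "\<And>i. i < K \<Longrightarrow> d \<le> measure (inst_law K Pr) {mu \<in> space (inst_law K Pr). A_star K mu = i}"
  shows "d \<le> delta_TS K Pr"
  unfolding delta_TS_def using assms by (subst Min_ge_iff) auto

lemma delta_TS_le_one:
  assumes "\<And>k. k < K \<Longrightarrow> is_prior (Pr k)" "0 < K"
  shows "delta_TS K Pr \<le> 1"
proof -
  interpret prob_space "inst_law K Pr"
    unfolding inst_law_def using assms(1) by (intro prob_space_PiM) (simp add: is_prior_def)
  have "delta_TS K Pr \<le> prob {mu \<in> space (inst_law K Pr). A_star K mu = 0}"
    unfolding delta_TS_def using assms(2) by (intro Min_le) auto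
  also have "\<dots> \<le> 1" by (rule prob_le_1)
  finally show ?thesis .
qed

lemma N_TS_le:
  assumes "0 \<le> C" "0 < e" "e \<le> eps_TS K Pr" "0 < d" "d \<le> delta_TS K Pr" "delta_TS K Pr \<le> 1"
  shows "N_TS C K Pr \<le> C / e\<^sup>2 * ln (1 / d)"
proof -
  have "1 / (eps_TS K Pr)\<^sup>2 \<le> 1 / e\<^sup>2"
    using assms(2,3) by (intro divide_left_mono power_mono) auto
  moreover have "ln (1 / delta_TS K Pr) \<le> ln (1 / d)"
    using assms(4,5) by (simp add: divide_left_mono)
  moreover have "0 \<le> ln (1 / delta_TS K Pr)"
    using assms(4-6) by simp
  ultimately have "N_TS C K Pr \<le> C * (1 / e\<^sup>2) * ln (1 / d)"
    unfolding N_TS_def using assms(1) by (intro mult_mono mult_left_mono) auto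
  then show ?thesis by simp
qed

lemma pairwise_nondom_two_arms:
  assumes "is_prior P" "is_prior Q" "pairwise_nondom 2 (\<lambda>n. if n = 0 then P else Q)"
  shows "0 < measure Q {..<mean P}"
proof -
  let ?Pr = "\<lambda>n::nat. if n = 0 then P else Q"
  have ps: "\<And>k. k \<in> {..<2} \<Longrightarrow> prob_space (?Pr k)" using assms(1,2) by (simp add: is_prior_def)
  have "(\<integral>mu. mu 0 \<partial>inst_law 2 ?Pr) = mean P"
    unfolding inst_law_def mean_def using assms(1)
    by (subst integral_PiM_component[OF ps]) (auto simp: is_prior_def measurable_ident_sets)
  moreover have "measure (inst_law 2 ?Pr) {mu \<in> space (inst_law 2 ?Pr). mu 1 \<in> {..<mean P}}
      = measure Q {..<mean P}"
    unfolding inst_law_def using assms(2)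
    by (subst measure_PiM_component[OF ps]) (auto simp: is_prior_def)
  moreover have "0 < measure (inst_law 2 ?Pr)
      {mu \<in> space (inst_law 2 ?Pr). mu 1 < (\<integral>mu. mu 0 \<partial>inst_law 2 ?Pr)}"
    using assms(3) unfolding pairwise_nondom_def by (elim allE[of _ 0] allE[of _ 1]) simp
  ultimately show ?thesis by simp
qed

lemma N_TS_le_linear:
  assumes "0 \<le> C" "2 \<le> K" and prior: "\<And>k. k < K \<Longrightarrow> is_prior (Pr k)" and "0 < q" "0 < e"
    and "\<And>i. i < K \<Longrightarrow> q \<le> measure (Pr i) {mean (Pr i)..}"
    and "\<And>i j. i < K \<Longrightarrow> j < K \<Longrightarrow> q \<le> measure (Pr j) {..<mean (Pr i)}"
    and gap: "\<And>i j. i < K \<Longrightarrow> j < K \<Longrightarrow> i \<noteq> j \<Longrightarrow> e \<le> (\<integral>mu. max (mu i - mu j) 0 \<partial>inst_law K Pr)"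
  shows "N_TS C K Pr \<le> C / e\<^sup>2 * ln (1 / q) * real K"
proof -
  have "e \<le> eps_TS K Pr" using assms(2) gap by (rule eps_TS_ge)
  moreover have "q ^ K \<le> delta_TS K Pr"
    using assms by (intro delta_TS_ge measure_A_star_ge) auto
  moreover have "delta_TS K Pr \<le> 1" using assms(2) prior by (intro delta_TS_le_one) auto
  ultimately have "N_TS C K Pr \<le> C / e\<^sup>2 * ln (1 / q ^ K)"
    using assms by (intro N_TS_le) auto
  also have "ln (1 / q ^ K) = real K * ln (1 / q)"
    using \<open>0 < q\<close> by (simp add: ln_realpow flip: power_one_over)
  finally show ?thesis by (simp add: mult_ac)
qed

lemma expected_gap_uniform_lower_bound:
  assumes "finite \<C>" and prior: "\<And>P. P \<in> \<C> \<Longrightarrow> is_prior P"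
    and below_mean: "\<And>P Q. P \<in> \<C> \<Longrightarrow> Q \<in> \<C> \<Longrightarrow> 0 < measure Q {..<mean P}"
  obtains e where "0 < e"
    "\<And>K Pr i j. \<forall>k<K. Pr k \<in> \<C> \<Longrightarrow> i < K \<Longrightarrow> j < K \<Longrightarrow> i \<noteq> j \<Longrightarrow>
      e \<le> (\<integral>mu. max (mu i - mu j) 0 \<partial>inst_law K Pr)"
proof -
  have "\<forall>P\<in>\<C>. \<forall>Q\<in>\<C>. \<exists>s<mean P. 0 < measure Q {..s}"
    using below_mean prior is_prior_real_distribution
    by (blast intro: finite_borel_measure.measure_lessThan_pos_imp_ex_atMost
        real_distribution.finite_borel_measure_M)
  then obtain s where s: "\<And>P Q. P \<in> \<C> \<Longrightarrow> Q \<in> \<C> \<Longrightarrow> s P Q < mean P \<and> 0 < measure Q {..s P Q}"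
    by metis
  obtain e where "0 < e"
    and e: "\<forall>(P, Q)\<in>\<C> \<times> \<C>. e \<le> (mean P - s P Q) * (measure P {mean P..} * measure Q {..s P Q})"
    using finite_ex_pos_lower_bound[of "\<C> \<times> \<C>"
        "\<lambda>(P, Q). (mean P - s P Q) * (measure P {mean P..} * measure Q {..s P Q})"]
      assms(1) s prior is_prior_measure_atLeast_mean_pos by auto
  moreover have "e \<le> (\<integral>mu. max (mu i - mu j) 0 \<partial>inst_law K Pr)"
    if arms: "\<forall>k<K. Pr k \<in> \<C>" and "i < K" "j < K" "i \<noteq> j" for K Pr i j
  proof -
    have "e \<le> (mean (Pr i) - s (Pr i) (Pr j))
        * (measure (Pr i) {mean (Pr i)..} * measure (Pr j) {..s (Pr i) (Pr j)})"
      using e arms that by auto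
    also have "\<dots> \<le> (\<integral>mu. max (mu i - mu j) 0 \<partial>inst_law K Pr)"
      unfolding inst_law_def using s arms prior that by (intro integral_PiM_pos_part_diff_ge) auto
    finally show ?thesis .
  qed
  ultimately show ?thesis using that by blast
qed

theorem corollary3p3:
  fixes C_TS :: real and \<C> :: "real measure set"
  assumes "C_TS > 0"
    and "finite \<C>"
    and "\<forall>P\<in>\<C>. is_prior P"
    and "\<forall>(K::nat) (Pr::nat \<Rightarrow> real measure). (\<forall>i<K. Pr i \<in> \<C>) \<longrightarrow> pairwise_nondom K Pr"
  shows "\<exists>c::real. \<forall>(K::nat) (Pr::nat \<Rightarrow> real measure).
           2 \<le> K \<longrightarrow> (\<forall>i<K. Pr i \<in> \<C>) \<longrightarrow> N_TS C_TS K Pr \<le> c * real K"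
proof -
  have prior: "\<And>P. P \<in> \<C> \<Longrightarrow> is_prior P" using assms(3) by blast
  have below_mean: "0 < measure Q {..<mean P}" if "P \<in> \<C>" "Q \<in> \<C>" for P Q
    using that prior assms(4)[rule_format, of 2 "\<lambda>n. if n = 0 then P else Q"]
    by (intro pairwise_nondom_two_arms) auto
  obtain q where "0 < q"
    and q: "\<forall>(P, Q)\<in>\<C> \<times> \<C>. q \<le> min (measure P {mean P..}) (measure Q {..<mean P})"
    using finite_ex_pos_lower_bound[of "\<C> \<times> \<C>"
        "\<lambda>(P, Q). min (measure P {mean P..}) (measure Q {..<mean P})"]
      assms(2) below_mean prior is_prior_measure_atLeast_mean_pos by auto
  obtain e where "0 < e" and gap: "\<And>K Pr i j. \<forall>k<K. Pr k \<in> \<C> \<Longrightarrow> i < K \<Longrightarrow> j < K \<Longrightarrow> i \<noteq> j \<Longrightarrow>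
      e \<le> (\<integral>mu. max (mu i - mu j) 0 \<partial>inst_law K Pr)"
    using expected_gap_uniform_lower_bound[OF assms(2) prior below_mean] by blast
  show ?thesis
  proof (intro exI[of _ "C_TS / e\<^sup>2 * ln (1 / q)"] allI impI)
    fix K :: nat and Pr :: "nat \<Rightarrow> real measure"
    assume "2 \<le> K" "\<forall>i<K. Pr i \<in> \<C>"
    then show "N_TS C_TS K Pr \<le> C_TS / e\<^sup>2 * ln (1 / q) * real K"
      using assms(1) \<open>0 < q\<close> \<open>0 < e\<close> prior q gap by (intro N_TS_le_linear) auto
  qed
qed

end
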